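(* Let $F:\mathcal{S}^{n\times n}\to\mathbb{R}$ be differentiable with $\|\nabla F(\boldsymbol{X}_1)-\nabla F(\boldsymbol{X}_2)\|_F\le L_F\|\boldsymbol{X}_1-\boldsymbol{X}_2\|_F$ for all $\boldsymbol{X}_1,\boldsymbol{X}_2\in\mathcal{S}^{n\times n}$, where $L_F>0$. Define $f(\boldsymbol{Q},\boldsymbol{\lambda})=F(\boldsymbol{Q}\operatorname{Diag}(\boldsymbol{\lambda})\boldsymbol{Q}^\top)$ and restrict it to $\mathcal{O}(n,n)\times\mathcal{C}$, where $\mathcal{C}\subseteq\mathbb{R}^n$ is bounded with $\|\boldsymbol{\lambda}\|\le D$ for all $\boldsymbol{\lambda}\in\mathcal{C}$. Then $f$ (with $\boldsymbol{x}=\boldsymbol{Q}$, $\boldsymbol{y}=\boldsymbol{\lambda}$) satisfies the following Lipschitz conditions: (i) there is $L_y\ge0$ with $\|\nabla_{\boldsymbol{\lambda}}f(\boldsymbol{Q},\boldsymbol{\lambda}_1)-\nabla_{\boldsymbol{\lambda}}f(\boldsymbol{Q},\boldsymbol{\lambda}_2)\|\le L_y\|\boldsymbol{\lambda}_1-\boldsymbol{\lambda}_2\|$; (ii) there is $L_x\ge1$ such that for every $\boldsymbol{\lambda}\in\mathcal{C}$, $f(\cdot,\boldsymbol{\lambda})$ has a gradient Lipschitz retraction on $\mathcal{O}(n,n)$ with constant $L_x$, with respect to the exponential map and with respect to a retraction on $\mathcal{O}(n,n)$, i.e. $f(R(\boldsymbol{Q},\boldsymbol{V}),\boldsymbol{\lambda})\le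 f(\boldsymbol{Q},\boldsymbol{\lambda})+\langle\operatorname{grad}_Qf(\boldsymbol{Q},\boldsymbol{\lambda}),\boldsymbol{V}\rangle+\frac{L_x}{2}\|\boldsymbol{V}\|_F^2$ for all $\boldsymbol{Q}\in\mathcal{O}(n,n)$, $\boldsymbol{V}\in T_{\boldsymbol{Q}}\mathcal{O}(n,n)$; (iii) there is $L_{xy}\ge0$ with $\|\nabla_{\boldsymbol{\lambda}}f(\boldsymbol{U},\boldsymbol{\lambda})-\nabla_{\boldsymbol{\lambda}}f(\boldsymbol{V},\boldsymbol{\lambda})\|\le L_{xy}\|\boldsymbol{U}-\boldsymbol{V}\|_F$ for all $\boldsymbol{U},\boldsymbol{V}\in\mathcal{O}(n,n)$, $\boldsymbol{\lambda}\in\mathcal{C}$.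
   Context: $\mathcal{S}^{n\times n}$: real symmetric matrices with the Frobenius inner product; $\mathcal{O}(n,n)$: orthogonal $n\times n$ matrices viewed as a Riemannian submanifold of $\mathbb{R}^{n\times n}$ with the Frobenius inner product; $\operatorname{grad}_Q$ the Riemannian gradient in $\boldsymbol{Q}$; $\nabla_{\boldsymbol{\lambda}}$ the Euclidean gradient in $\boldsymbol{\lambda}$. A retraction is a smooth map $R:T\mathcal{O}(n,n)\to\mathcal{O}(n,n)$ with $R(\boldsymbol{Q},\boldsymbol{0})=\boldsymbol{Q}$ and $DR(\boldsymbol{Q},\cdot)(\boldsymbol{0})=\mathrm{id}$. *)

theory Defs
  imports "HOL-Analysis.Analysis"
begin

type_synonym 'n mat = "real^'n^'n"

text \<open>Real symmetric matrices (Frobenius inner product = the inner product of real^'n^'n).\<close>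
definition sym_mats :: "('n::finite) mat set" where
  "sym_mats = {X. transpose X = X}"

definition orth_group :: "('n::finite) mat set" where
  "orth_group = {Q. orthogonal_matrix Q}"

definition tangent_orth :: "('n::finite) mat \<Rightarrow> ('n::finite) mat set" where
  "tangent_orth Q = {V. transpose Q ** V + transpose V ** Q = 0}"

definition Diag :: "real^'n \<Rightarrow> real^'n^'n" where
  "Diag l = (\<chi> i j. if i = j then l $ i else 0)"

definition eucl_grad :: "('a::real_inner \<Rightarrow> real) \<Rightarrow> 'a \<Rightarrow> 'a" where
  "eucl_grad g y = (THE G. (g has_derivative (\<lambda>h. G \<bullet> h)) (at y))"

definition proj_tangent :: "('n::finite) mat \<Rightarrow> 'n mat \<Rightarrow> 'n mat" where
  "proj_tangent Q G = (THE P. P \<in> tangent_orth Q \<and> (\<forall>V\<in>tangent_orth Q. (G - P) \<bullet> V = 0))"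

text \<open>Riemannian gradient on the Riemannian submanifold O(n,n) of R^{n x n}: the
  orthogonal projection of the Euclidean gradient (of the ambient function) onto T_Q.\<close>
definition riem_grad :: "(('n::finite) mat \<Rightarrow> real) \<Rightarrow> 'n mat \<Rightarrow> 'n mat" where
  "riem_grad g Q = proj_tangent Q (eucl_grad g Q)"

fun Ck_on :: "nat \<Rightarrow> ('a::euclidean_space \<Rightarrow> 'b::real_normed_vector) \<Rightarrow> 'a set \<Rightarrow> bool" where
  "Ck_on 0 f U = continuous_on U f"
| "Ck_on (Suc k) f U =
     (\<exists>f'. (\<forall>x\<in>U. (f has_derivative f' x) (at x)) \<and> (\<forall>v. Ck_on k (\<lambda>x. f' x v) U))"

definition smooth_on_set :: "'a set \<Rightarrow> ('a::euclidean_space \<Rightarrow> 'b::real_normed_vector) \<Rightarrow> bool" where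
  "smooth_on_set S f = (\<exists>U g. open U \<and> S \<subseteq> U \<and> (\<forall>x\<in>S. g x = f x) \<and> (\<forall>k. Ck_on k g U))"

definition tangent_bundle_orth :: "(('n::finite) mat \<times> 'n mat) set" where
  "tangent_bundle_orth = {(Q, V). Q \<in> orth_group \<and> V \<in> tangent_orth Q}"

definition is_retraction :: "(('n::finite) mat \<Rightarrow> 'n mat \<Rightarrow> 'n mat) \<Rightarrow> bool" where
  "is_retraction R \<longleftrightarrow>
     (\<forall>(Q, V)\<in>tangent_bundle_orth. R Q V \<in> orth_group) \<and>
     smooth_on_set tangent_bundle_orth (\<lambda>p. R (fst p) (snd p)) \<and>
     (\<forall>Q\<in>orth_group. R Q 0 = Q \<and>
        ((\<lambda>V. R Q V) has_derivative id) (at 0 within tangent_orth Q))"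

fun matpow :: "real^'n^'n \<Rightarrow> nat \<Rightarrow> real^'n^'n" where
  "matpow A 0 = mat 1"
| "matpow A (Suc k) = A ** matpow A k"

definition mexp :: "real^'n^'n \<Rightarrow> real^'n^'n" where
  "mexp A = (\<Sum>k. (1 / fact k) *\<^sub>R matpow A k)"

text \<open>Riemannian exponential map of O(n,n) with the (bi-invariant) Frobenius metric:
  Exp_Q(V) = Q expm(Q^T V).\<close>
definition exp_orth :: "('n::finite) mat \<Rightarrow> 'n mat \<Rightarrow> 'n mat" where
  "exp_orth Q V = Q ** mexp (transpose Q ** V)"

definition grad_lipschitz_retraction ::
  "(('n::finite) mat \<Rightarrow> real) \<Rightarrow> ('n mat \<Rightarrow> 'n mat \<Rightarrow> 'n mat) \<Rightarrow> real \<Rightarrow> bool" where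
  "grad_lipschitz_retraction g R L \<longleftrightarrow>
     (\<forall>Q\<in>orth_group. \<forall>V\<in>tangent_orth Q.
        g (R Q V) \<le> g Q + riem_grad g Q \<bullet> V + L / 2 * (norm V)\<^sup>2)"

end

theory Submission
  imports Defs
begin

text \<open>
  Write \<open>X = Q Diag(l) Q\<^sup>T\<close>. The Euclidean gradients of \<open>f\<close> are
  \<open>diag(Q\<^sup>T \<nabla>F(X) Q)\<close> in \<open>l\<close> and \<open>2 \<nabla>F(X) Q Diag(l)\<close> in \<open>Q\<close>.
  Since conjugation by an orthogonal matrix is a Frobenius isometry, (i) and (iii) follow
  directly from the Lipschitz continuity of \<open>\<nabla>F\<close>.

  For (ii), the gradient in \<open>Q\<close> is bounded and Lipschitz on the ball of radius \<open>\<surd>n\<close>, which is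
  convex and contains \<open>O(n)\<close>; hence \<open>f\<close> differs from its linearisation at \<open>Q\<close> by at most
  \<open>L \<parallel>Y - Q\<parallel>\<^sup>2\<close> for all \<open>Y\<close> in the ball. Both the exponential map and the retraction \<open>R\<close>
  satisfy \<open>\<parallel>R\<^sub>Q(V) - Q - V\<parallel> \<le> \<alpha> \<parallel>V\<parallel>\<^sup>2\<close> on the whole tangent bundle: for \<open>\<parallel>V\<parallel> \<le> 1\<close> by the
  power series remainder of \<open>exp\<close>, respectively by a second-order Taylor bound for a smooth
  extension of \<open>R\<close> on the compact unit tangent bundle, and for \<open>\<parallel>V\<parallel> \<ge> 1\<close> because \<open>O(n)\<close> is
  bounded. Taking \<open>Y = R\<^sub>Q(V)\<close> and using that the Riemannian gradient agrees with the
  Euclidean one on tangent vectors gives the retraction inequality.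
\<close>

section \<open>Frobenius norm of real matrices\<close>

lemma power2_norm_vec: "(norm (x::real^'n))\<^sup>2 = (\<Sum>i\<in>UNIV. (x$i)\<^sup>2)"
  unfolding power2_norm_eq_inner by (simp add: inner_vec_def power2_eq_square)

lemma power2_norm_matrix: "(norm (A::real^'m^'n))\<^sup>2 = (\<Sum>i\<in>UNIV. \<Sum>j\<in>UNIV. (A$i$j)\<^sup>2)"
  unfolding power2_norm_eq_inner by (simp add: inner_vec_def power2_eq_square)

lemma norm_transpose: "norm (transpose (A::real^'m^'n)) = norm A"
proof -
  have "(norm (transpose A))\<^sup>2 = (norm A)\<^sup>2"
    unfolding power2_norm_matrix transpose_def by (simp, subst sum.swap, simp)
  then show ?thesis by (simp add: power2_eq_iff_nonneg)
qed

lemma norm_matrix_mult_le: "norm ((A::real^'k^'n) ** (B::real^'m^'k)) \<le> norm A * norm B"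
proof -
  let ?B = "transpose B"
  have "(norm (A ** B))\<^sup>2 = (\<Sum>i\<in>UNIV. \<Sum>j\<in>UNIV. (A $ i \<bullet> ?B $ j)\<^sup>2)"
    by (simp add: power2_norm_matrix matrix_matrix_mult_def inner_vec_def transpose_def)
  also have "\<dots> \<le> (\<Sum>i\<in>UNIV. \<Sum>j\<in>UNIV. (norm (A $ i))\<^sup>2 * (norm (?B $ j))\<^sup>2)"
  proof (intro sum_mono)
    fix i j
    have "\<bar>A $ i \<bullet> ?B $ j\<bar>\<^sup>2 \<le> (norm (A $ i) * norm (?B $ j))\<^sup>2"
      by (intro power_mono Cauchy_Schwarz_ineq2) simp
    then show "(A $ i \<bullet> ?B $ j)\<^sup>2 \<le> (norm (A $ i))\<^sup>2 * (norm (?B $ j))\<^sup>2"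
      by (simp add: power_mult_distrib)
  qed
  also have "\<dots> = (norm A)\<^sup>2 * (norm ?B)\<^sup>2"
    unfolding sum_product[symmetric] by (simp add: power2_norm_eq_inner inner_vec_def)
  also have "\<dots> = (norm A * norm B)\<^sup>2"
    by (simp add: norm_transpose power_mult_distrib)
  finally show ?thesis
    by (rule power2_le_imp_le) simp
qed

lemma norm_matrix_mult3_le:
  "norm ((A::real^'k^'n) ** (B::real^'j^'k) ** (C::real^'m^'j)) \<le> norm A * norm B * norm C"
  by (meson mult_right_mono norm_ge_zero norm_matrix_mult_le order_trans)

lemma bounded_bilinear_matrix_mult:
  "bounded_bilinear ((**) :: real^'k^'n \<Rightarrow> real^'m^'k \<Rightarrow> real^'m^'n)"
proof
  show "\<exists>K. \<forall>A B. norm ((A::real^'k^'n) ** (B::real^'m^'k)) \<le> norm A * norm B * K"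
    by (metis mult.right_neutral norm_matrix_mult_le)
qed (simp_all add: matrix_matrix_mult_def vec_eq_iff sum.distrib algebra_simps sum_distrib_left)

lemmas matrix_mult_diff_left = bounded_bilinear.diff_left[OF bounded_bilinear_matrix_mult]

lemmas matrix_mult_diff_right = bounded_bilinear.diff_right[OF bounded_bilinear_matrix_mult]

lemma bounded_linear_transpose: "bounded_linear (transpose :: real^'m^'n \<Rightarrow> real^'n^'m)"
proof (rule bounded_linear_intro[where K=1])
  show "norm (transpose A) \<le> norm A * 1" for A :: "real^'m^'n"
    by (simp add: norm_transpose)
qed (simp_all add: transpose_def vec_eq_iff)

lemma transpose_zero [simp]: "transpose 0 = (0::real^'m^'n)"
  by (simp add: transpose_def vec_eq_iff)

lemma transpose_diff: "transpose ((A::real^'m^'n) - B) = transpose A - transpose B"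
  by (rule linear_diff[OF bounded_linear.linear[OF bounded_linear_transpose]])

lemma continuous_on_matrix_mult [continuous_intros]:
  fixes f :: "'a::topological_space \<Rightarrow> real^'k^'n" and g :: "'a \<Rightarrow> real^'m^'k"
  shows "continuous_on S f \<Longrightarrow> continuous_on S g \<Longrightarrow> continuous_on S (\<lambda>x. f x ** g x)"
  by (rule bounded_bilinear.continuous_on[OF bounded_bilinear_matrix_mult])

lemma continuous_on_transpose [continuous_intros]:
  fixes f :: "'a::topological_space \<Rightarrow> real^'m^'n"
  shows "continuous_on S f \<Longrightarrow> continuous_on S (\<lambda>x. transpose (f x))"
  by (rule bounded_linear.continuous_on[OF bounded_linear_transpose])

lemma inner_transpose: "(A::real^'m^'n) \<bullet> transpose B = transpose A \<bullet> B"
  unfolding inner_vec_def transpose_def by (simp, subst sum.swap, simp add: mult.commute)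

lemma inner_matrix_mult_right:
  "(A::real^'m^'n) \<bullet> ((B::real^'k^'n) ** (C::real^'m^'k)) = (A ** transpose C) \<bullet> B"
  unfolding inner_vec_def matrix_matrix_mult_def transpose_def
  by (simp add: sum_distrib_left sum_distrib_right mult_ac, subst (2) sum.swap, simp)

lemma inner_matrix_mult_left:
  "(A::real^'m^'n) \<bullet> ((B::real^'k^'n) ** (C::real^'m^'k)) = (transpose B ** A) \<bullet> C"
proof -
  have "A \<bullet> (B ** C) = transpose A \<bullet> (transpose C ** transpose B)"
    by (metis inner_transpose matrix_transpose_mul transpose_transpose)
  also have "\<dots> = (transpose B ** A) \<bullet> C"
    by (metis inner_matrix_mult_right inner_transpose matrix_transpose_mul transpose_transpose)
  finally show ?thesis .
qed

lemma norm_orthogonal_matrix_mult: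
  assumes "orthogonal_matrix (Q::real^'n^'n)"
  shows "norm (Q ** (M::real^'m^'n)) = norm M"
proof -
  have "(Q ** M) \<bullet> (Q ** M) = M \<bullet> M"
    using assms by (simp add: inner_matrix_mult_left matrix_mul_assoc orthogonal_matrix)
  then show ?thesis by (simp add: norm_eq_sqrt_inner)
qed

lemma norm_matrix_mult_orthogonal:
  assumes "orthogonal_matrix (Q::real^'n^'n)"
  shows "norm ((M::real^'n^'m) ** Q) = norm M"
  using norm_orthogonal_matrix_mult[of "transpose Q" "transpose M"] assms
  by (simp add: norm_transpose flip: matrix_transpose_mul)

lemma norm_mat_1: "norm (mat 1 :: real^'n^'n) = sqrt CARD('n)"
proof -
  have "(norm (mat 1 :: real^'n^'n))\<^sup>2 = CARD('n)"
    by (simp add: power2_norm_matrix mat_def if_distrib if_distribR cong: if_cong)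
  then show ?thesis by (simp add: real_sqrt_unique)
qed

lemma norm_orthogonal_matrix:
  "orthogonal_matrix (Q::real^'n^'n) \<Longrightarrow> norm Q = sqrt CARD('n)"
  using norm_orthogonal_matrix_mult[of Q "mat 1"] by (simp add: norm_mat_1)

section \<open>Diagonal matrices and conjugation\<close>

lemma transpose_Diag [simp]: "transpose (Diag l) = Diag l"
  by (simp add: Diag_def transpose_def vec_eq_iff)

lemma norm_Diag [simp]: "norm (Diag (l::real^'n)) = norm l"
proof -
  have "(Diag l $ i $ j)\<^sup>2 = (if i = j then (l $ i)\<^sup>2 else 0)" for i j
    by (simp add: Diag_def)
  then have "(norm (Diag l))\<^sup>2 = (norm l)\<^sup>2"
    unfolding power2_norm_matrix power2_norm_vec by simp
  then show ?thesis by (simp add: power2_eq_iff_nonneg)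
qed

lemma bounded_linear_Diag: "bounded_linear (Diag :: real^'n \<Rightarrow> real^'n^'n)"
proof (rule bounded_linear_intro[where K=1])
  show "norm (Diag l) \<le> norm l * 1" for l :: "real^'n"
    by simp
qed (simp_all add: Diag_def vec_eq_iff)

lemma conj_Diag_in_sym_mats: "Y ** Diag l ** transpose Y \<in> sym_mats"
  by (simp add: sym_mats_def matrix_transpose_mul matrix_mul_assoc)

definition mat_diag :: "real^'n^'n \<Rightarrow> real^'n" where
  "mat_diag M = (\<chi> i. M $ i $ i)"

lemma inner_Diag_right: "M \<bullet> Diag h = mat_diag M \<bullet> h"
  by (simp add: inner_vec_def Diag_def mat_diag_def if_distrib cong: if_cong)

lemma norm_mat_diag_le: "norm (mat_diag M) \<le> norm M"
proof -
  have "(norm (mat_diag M))\<^sup>2 = (\<Sum>i\<in>UNIV. (M$i$i)\<^sup>2)"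
    unfolding power2_norm_vec by (simp add: mat_diag_def)
  also have "\<dots> \<le> (norm M)\<^sup>2"
    unfolding power2_norm_matrix by (intro sum_mono member_le_sum) auto
  finally show ?thesis by (rule power2_le_imp_le) simp
qed

lemma mat_diag_diff: "mat_diag (A - B) = mat_diag A - mat_diag B"
  by (simp add: mat_diag_def vec_eq_iff)

lemma norm_conj_Diag_le: "norm (Y ** Diag l ** transpose Y) \<le> (norm Y)\<^sup>2 * norm l"
proof -
  have "norm (Y ** Diag l ** transpose Y) \<le> norm Y * norm l * norm Y"
    using norm_matrix_mult3_le[of Y "Diag l" "transpose Y"] by (simp add: norm_transpose)
  then show ?thesis by (simp add: power2_eq_square mult_ac)
qed

lemma norm_conj_Diag_diff_le:
  "norm (Y1 ** Diag l ** transpose Y1 - Y2 ** Diag l ** transpose Y2)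
     \<le> (norm Y1 + norm Y2) * norm l * norm (Y1 - Y2)"
proof -
  have "Y1 ** Diag l ** transpose Y1 - Y2 ** Diag l ** transpose Y2
      = (Y1 - Y2) ** Diag l ** transpose Y1 + Y2 ** Diag l ** transpose (Y1 - Y2)"
    by (simp add: matrix_mult_diff_left matrix_mult_diff_right transpose_diff)
  moreover have "norm ((Y1 - Y2) ** Diag l ** transpose Y1) \<le> norm (Y1 - Y2) * norm l * norm Y1"
    using norm_matrix_mult3_le[of "Y1 - Y2" "Diag l" "transpose Y1"] by (simp add: norm_transpose)
  moreover have "norm (Y2 ** Diag l ** transpose (Y1 - Y2)) \<le> norm Y2 * norm l * norm (Y1 - Y2)"
    using norm_matrix_mult3_le[of Y2 "Diag l" "transpose (Y1 - Y2)"] by (simp add: norm_transpose)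
  ultimately show ?thesis
    using norm_triangle_ineq[of "(Y1 - Y2) ** Diag l ** transpose Y1" "Y2 ** Diag l ** transpose (Y1 - Y2)"]
    by (simp add: algebra_simps)
qed

lemma norm_conj_Diag_orthogonal:
  "orthogonal_matrix Q \<Longrightarrow> norm (Q ** Diag l ** transpose Q) = norm l"
  by (simp add: norm_orthogonal_matrix_mult norm_matrix_mult_orthogonal)

lemma has_derivative_conj:
  "((\<lambda>Y::real^'n^'n. Y ** M ** transpose Y) has_derivative
     (\<lambda>H. Y ** M ** transpose H + H ** M ** transpose Y)) (at Y within S)"
  by (rule bounded_bilinear.FDERIV[OF bounded_bilinear_matrix_mult
      bounded_linear_imp_has_derivative bounded_linear_imp_has_derivative,
      OF bounded_bilinear.bounded_linear_left[OF bounded_bilinear_matrix_mult]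
         bounded_linear_transpose])

lemma bounded_linear_conj_Diag: "bounded_linear (\<lambda>l. Q ** Diag l ** transpose Q)"
  by (rule bounded_linear_compose[OF bounded_linear_compose bounded_linear_Diag,
        OF bounded_bilinear.bounded_linear_left bounded_bilinear.bounded_linear_right,
        OF bounded_bilinear_matrix_mult bounded_bilinear_matrix_mult])

section \<open>Gradients and first- and second-order Taylor bounds\<close>

lemma eucl_grad_eqI:
  fixes g :: "'a::real_inner \<Rightarrow> real"
  assumes "(g has_derivative (\<lambda>h. G \<bullet> h)) (at y)"
  shows "eucl_grad g y = G"
  unfolding eucl_grad_def
proof (rule the_equality)
  fix G' assume "(g has_derivative (\<lambda>h. G' \<bullet> h)) (at y)"
  with assms have "(\<lambda>h. G \<bullet> h) = (\<lambda>h. G' \<bullet> h)"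
    by (rule has_derivative_unique)
  then show "G' = G"
    by (metis vector_eq_rdot)
qed (rule assms)

lemma add_scaleR_diff_in_closed_segment: "t \<in> {0..1} \<Longrightarrow> x + t *\<^sub>R (y - x) \<in> closed_segment x y"
  by (auto simp: in_segment algebra_simps intro!: exI[of _ t])

lemma lipschitz_gradient_remainder_le:
  fixes g :: "'a::real_inner \<Rightarrow> real"
  assumes "convex S" "x \<in> S" "y \<in> S"
    and deriv: "\<And>z. z \<in> S \<Longrightarrow> (g has_derivative (\<lambda>h. gr z \<bullet> h)) (at z)"
    and lip: "\<And>z. z \<in> S \<Longrightarrow> norm (gr z - gr x) \<le> L * norm (z - x)"
    and "0 \<le> L"
  shows "\<bar>g y - g x - gr x \<bullet> (y - x)\<bar> \<le> L * (norm (y - x))\<^sup>2"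
proof -
  let ?I = "closed_segment x y"
  have I: "?I \<subseteq> S"
    using assms by (simp add: closed_segment_subset)
  have "norm (g y - g x - gr x \<bullet> (y - x)) \<le> norm (y - x) * (L * norm (y - x))"
  proof (rule differentiable_bound_linearization[where S="?I" and f'="\<lambda>z h. gr z \<bullet> h"])
    show "x + t *\<^sub>R (y - x) \<in> ?I" if "t \<in> {0..1}" for t
      using that by (rule add_scaleR_diff_in_closed_segment)
    show "(g has_derivative (\<lambda>h. gr z \<bullet> h)) (at z within ?I)" if "z \<in> ?I" for z
      using deriv I that by (blast intro: has_derivative_at_withinI)
    show "onorm ((\<lambda>h. gr z \<bullet> h) - (\<lambda>h. gr x \<bullet> h)) \<le> L * norm (y - x)" if z: "z \<in> ?I" for z
    proof (rule onorm_bound)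
      show "0 \<le> L * norm (y - x)" using \<open>0 \<le> L\<close> by simp
      fix h
      have "norm (gr z - gr x) \<le> L * norm (z - x)"
        using lip I z by blast
      also have "\<dots> \<le> L * norm (y - x)"
        using segment_bound(1)[OF z] \<open>0 \<le> L\<close> by (rule mult_left_mono)
      finally have "norm (gr z - gr x) \<le> L * norm (y - x)" .
      then show "norm (((\<lambda>h. gr z \<bullet> h) - (\<lambda>h. gr x \<bullet> h)) h) \<le> L * norm (y - x) * norm h"
        using norm_cauchy_schwarz[of "gr z - gr x" h] Cauchy_Schwarz_ineq2[of "gr z - gr x" h]
        by (simp add: inner_diff_left mult_right_mono order_trans)
    qed
  qed simp
  then show ?thesis
    by (simp add: power2_eq_square mult_ac)
qed

lemma norm_linear_le_sum_Basis:
  fixes L :: "'a::euclidean_space \<Rightarrow> 'b::real_normed_vector"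
  assumes "linear L"
  shows "norm (L v) \<le> norm v * (\<Sum>b\<in>Basis. norm (L b))"
proof -
  have "L v = L (\<Sum>b\<in>Basis. (v \<bullet> b) *\<^sub>R b)"
    by (simp add: euclidean_representation)
  then have "norm (L v) = norm (\<Sum>b\<in>Basis. (v \<bullet> b) *\<^sub>R L b)"
    by (simp add: linear_sum[OF assms] linear_scale[OF assms])
  also have "\<dots> \<le> (\<Sum>b\<in>Basis. norm v * norm (L b))"
    by (rule order_trans[OF norm_sum sum_mono]) (simp add: Basis_le_norm mult_right_mono)
  finally show ?thesis
    by (simp add: sum_distrib_left)
qed

lemma Ck_on_2_second_derivative_bound:
  fixes h :: "'a::euclidean_space \<Rightarrow> 'b::real_normed_vector"
  assumes "Ck_on 2 h U" "compact K" "K \<subseteq> U"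
  obtains h' h'' B where "\<And>x. x \<in> U \<Longrightarrow> (h has_derivative h' x) (at x)"
    and "\<And>v x. x \<in> U \<Longrightarrow> ((\<lambda>x. h' x v) has_derivative h'' v x) (at x)"
    and "\<And>v x u. x \<in> K \<Longrightarrow> norm (h'' v x u) \<le> B v * norm u" and "\<And>v. 0 \<le> B v"
proof -
  obtain h' where h': "\<And>x. x \<in> U \<Longrightarrow> (h has_derivative h' x) (at x)"
    and "\<forall>v. \<exists>g. (\<forall>x\<in>U. ((\<lambda>x. h' x v) has_derivative g x) (at x)) \<and> (\<forall>w. continuous_on U (\<lambda>x. g x w))"
    using assms(1) by (auto simp: numeral_2_eq_2)
  from choice[OF this(2)] obtain h'' where
    h'': "\<And>v x. x \<in> U \<Longrightarrow> ((\<lambda>x. h' x v) has_derivative h'' v x) (at x)"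
    and cont: "\<And>v w. continuous_on U (\<lambda>x. h'' v x w)"
    by blast
  have "\<forall>v b. \<exists>c>0. \<forall>x\<in>K. norm (h'' v x b) \<le> c"
    using compact_imp_bounded[OF compact_continuous_image[OF continuous_on_subset[OF cont assms(3)] assms(2)]]
    by (auto simp: bounded_pos)
  then obtain c where c: "\<And>v b x. x \<in> K \<Longrightarrow> norm (h'' v x b) \<le> c v b" and c0: "\<And>v b. 0 < c v b"
    by (metis (mono_tags) choice)
  show ?thesis
  proof
    show "norm (h'' v x u) \<le> (\<Sum>b\<in>Basis. c v b) * norm u" if "x \<in> K" for v x u
    proof -
      have "linear (h'' v x)"
        using h'' that assms(3) by (blast intro: has_derivative_linear)
      then have "norm (h'' v x u) \<le> norm u * (\<Sum>b\<in>Basis. norm (h'' v x b))"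
        by (rule norm_linear_le_sum_Basis)
      also have "\<dots> \<le> norm u * (\<Sum>b\<in>Basis. c v b)"
        using c that by (intro mult_left_mono sum_mono) auto
      finally show ?thesis by (simp add: mult.commute)
    qed
    show "0 \<le> (\<Sum>b\<in>Basis. c v b)" for v
      using c0 by (simp add: sum_nonneg less_imp_le)
  qed (use h' h'' in auto)
qed

lemma Ck_on_2_derivative_lipschitz:
  fixes h :: "'a::euclidean_space \<Rightarrow> 'b::real_normed_vector"
  assumes "Ck_on 2 h U" "compact K" "K \<subseteq> U"
  obtains h' M where "\<And>x. x \<in> U \<Longrightarrow> (h has_derivative h' x) (at x)" and "0 \<le> M"
    and "\<And>y z w. closed_segment y z \<subseteq> K \<Longrightarrow> norm (h' z w - h' y w) \<le> M * norm (z - y) * norm w"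
proof -
  obtain h' h'' B where h': "\<And>x. x \<in> U \<Longrightarrow> (h has_derivative h' x) (at x)"
    and h'': "\<And>v x. x \<in> U \<Longrightarrow> ((\<lambda>x. h' x v) has_derivative h'' v x) (at x)"
    and B: "\<And>v x u. x \<in> K \<Longrightarrow> norm (h'' v x u) \<le> B v * norm u" and B0: "\<And>v. 0 \<le> B v"
    using Ck_on_2_second_derivative_bound[OF assms] by blast
  have basis: "norm (h' z b - h' y b) \<le> B b * norm (z - y)"
    if seg: "closed_segment y z \<subseteq> K" for y z b
  proof (rule differentiable_bound[where S="closed_segment y z" and f'="h'' b"])
    show "((\<lambda>x. h' x b) has_derivative h'' b x) (at x within closed_segment y z)"
      if "x \<in> closed_segment y z" for x
      using h'' seg assms(3) that by (blast intro: has_derivative_at_withinI)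
    show "onorm (h'' b x) \<le> B b" if "x \<in> closed_segment y z" for x
      using B seg that B0 by (intro onorm_bound) auto
  qed auto
  show ?thesis
  proof
    show "0 \<le> (\<Sum>b\<in>Basis. B b)"
      using B0 by (simp add: sum_nonneg)
    fix y z w assume seg: "closed_segment y z \<subseteq> K"
    have "linear (\<lambda>w. h' z w - h' y w)"
      using h' seg assms(3) by (blast intro: linear_compose_sub has_derivative_linear)
    then have "norm (h' z w - h' y w) \<le> norm w * (\<Sum>b\<in>Basis. norm (h' z b - h' y b))"
      by (rule norm_linear_le_sum_Basis)
    also have "\<dots> \<le> norm w * (\<Sum>b\<in>Basis. B b * norm (z - y))"
      using basis[OF seg] by (intro mult_left_mono sum_mono) simp_all
    finally show "norm (h' z w - h' y w) \<le> (\<Sum>b\<in>Basis. B b) * norm (z - y) * norm w"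
      by (simp add: sum_distrib_right mult_ac)
  qed (use h' in auto)
qed

lemma Ck_on_2_taylor_bound:
  fixes h :: "'a::euclidean_space \<Rightarrow> 'b::real_normed_vector"
  assumes "Ck_on 2 h U" "compact K" "K \<subseteq> U"
  obtains h' M where "\<And>x. x \<in> U \<Longrightarrow> (h has_derivative h' x) (at x)" and "0 \<le> M"
    and "\<And>x y. closed_segment x y \<subseteq> K \<Longrightarrow> norm (h y - h x - h' x (y - x)) \<le> M * (norm (y - x))\<^sup>2"
proof -
  obtain h' M where h': "\<And>x. x \<in> U \<Longrightarrow> (h has_derivative h' x) (at x)" and "0 \<le> M"
    and lip: "\<And>y z w. closed_segment y z \<subseteq> K \<Longrightarrow> norm (h' z w - h' y w) \<le> M * norm (z - y) * norm w"
    using Ck_on_2_derivative_lipschitz[OF assms] by blast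
  have "norm (h y - h x - h' x (y - x)) \<le> norm (y - x) * (M * norm (y - x))"
    if seg: "closed_segment x y \<subseteq> K" for x y
  proof (rule differentiable_bound_linearization[where S="closed_segment x y"])
    show "x + t *\<^sub>R (y - x) \<in> closed_segment x y" if "t \<in> {0..1}" for t
      using that by (rule add_scaleR_diff_in_closed_segment)
    show "(h has_derivative h' z) (at z within closed_segment x y)" if "z \<in> closed_segment x y" for z
      using h' seg assms(3) that by (blast intro: has_derivative_at_withinI)
    show "onorm (h' z - h' x) \<le> M * norm (y - x)" if z: "z \<in> closed_segment x y" for z
    proof (rule onorm_bound)
      show "0 \<le> M * norm (y - x)" using \<open>0 \<le> M\<close> by simp
      have "closed_segment x z \<subseteq> K"
        using seg z by (meson dual_order.trans ends_in_segment(1) subset_closed_segment)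
      then have "norm (h' z w - h' x w) \<le> M * norm (z - x) * norm w" for w
        by (rule lip)
      also have "M * norm (z - x) * norm w \<le> M * norm (y - x) * norm w" for w
        using segment_bound(1)[OF z] \<open>0 \<le> M\<close> by (intro mult_right_mono mult_left_mono) simp_all
      finally show "norm ((h' z - h' x) w) \<le> M * norm (y - x) * norm w" for w
        by (simp add: fun_diff_def)
    qed
  qed simp
  then show ?thesis
    using that[OF h' \<open>0 \<le> M\<close>] by (simp add: power2_eq_square mult_ac)
qed

section \<open>The matrix exponential\<close>

lemma norm_matpow_le: "norm (matpow (A::real^'n^'n) k) \<le> sqrt CARD('n) * norm A ^ k"
proof (induction k)
  case 0
  then show ?case by (simp add: norm_mat_1)
next
  case (Suc k)
  have "norm (matpow A (Suc k)) \<le> norm A * norm (matpow A k)"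
    by (simp add: norm_matrix_mult_le)
  also have "\<dots> \<le> norm A * (sqrt CARD('n) * norm A ^ k)"
    by (rule mult_left_mono[OF Suc.IH]) simp
  finally show ?case by (simp add: algebra_simps)
qed

lemma matpow_commute: "matpow A k ** A = A ** matpow A k"
  by (induction k) (simp_all add: matrix_mul_assoc[symmetric])

lemma matpow_add: "matpow A (i + j) = matpow A i ** matpow A j"
  by (induction i) (simp_all add: matrix_mul_assoc)

lemma transpose_matpow: "transpose (matpow A k) = matpow (transpose A) k"
  by (induction k) (simp_all add: matrix_transpose_mul matpow_commute)

lemma matpow_uminus: "matpow (- (A::real^'n^'n)) k = (-1) ^ k *\<^sub>R matpow A k"
  by (induction k)
    (simp_all add: bounded_bilinear.minus_left[OF bounded_bilinear_matrix_mult]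
      bounded_bilinear.scaleR_right[OF bounded_bilinear_matrix_mult])

lemma norm_mexp_series_le:
  "norm ((1 / fact k) *\<^sub>R matpow (A::real^'n^'n) k) \<le> sqrt CARD('n) * (norm A ^ k / fact k)"
  using divide_right_mono[OF norm_matpow_le, of "fact k" A k] by simp

lemma exp_series_sums: "(\<lambda>k. x ^ k / fact k) sums exp (x::real)"
  using exp_converges[of x] by (simp add: divide_inverse_commute)

lemma summable_norm_mexp_series:
  "summable (\<lambda>k. norm ((1 / fact k) *\<^sub>R matpow (A::real^'n^'n) k))"
  by (rule summable_comparison_test'[OF summable_mult[OF sums_summable[OF exp_series_sums]]])
    (use norm_mexp_series_le in auto)

lemma mexp_sums: "(\<lambda>k. (1 / fact k) *\<^sub>R matpow (A::real^'n^'n) k) sums mexp A"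
  unfolding mexp_def by (rule summable_sums[OF summable_norm_cancel[OF summable_norm_mexp_series]])

lemma Cauchy_product_sums_matrix:
  fixes a :: "nat \<Rightarrow> real^'k^'n" and b :: "nat \<Rightarrow> real^'m^'k"
  assumes a: "summable (\<lambda>i. norm (a i))" and b: "summable (\<lambda>i. norm (b i))"
  shows "(\<lambda>k. \<Sum>i\<le>k. a i ** b (k - i)) sums (suminf a ** suminf b)"
proof -
  have norm_entry: "norm (M $ p $ q) \<le> norm M" for M :: "real^'j^'i" and p q
    by (rule order_trans[OF Finite_Cartesian_Product.norm_nth_le Finite_Cartesian_Product.norm_nth_le])
  have entry_sums: "(\<lambda>i. c i $ p $ q) sums (suminf c $ p $ q)"
    if "summable (\<lambda>i. norm (c i))" for c :: "nat \<Rightarrow> real^'j^'i" and p q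
    by (intro sums_vec_nth summable_sums summable_norm_cancel[OF that])
  have entry_norm: "summable (\<lambda>i. norm (c i $ p $ q))"
    if "summable (\<lambda>i. norm (c i))" for c :: "nat \<Rightarrow> real^'j^'i" and p q
    by (rule summable_comparison_test'[OF that, where N=0]) (use norm_entry in simp)
  have "(\<lambda>k. (\<Sum>i\<le>k. a i ** b (k - i)) $ p $ q) sums ((suminf a ** suminf b) $ p $ q)" for p q
  proof -
    have "(\<lambda>k. \<Sum>i\<le>k. a i $ p $ r * b (k - i) $ r $ q) sums (suminf a $ p $ r * suminf b $ r $ q)"
      for r
      using Cauchy_product_sums[OF entry_norm[OF a] entry_norm[OF b]]
        sums_unique[OF entry_sums[OF a]] sums_unique[OF entry_sums[OF b]] by simp
    then have "(\<lambda>k. \<Sum>r\<in>UNIV. \<Sum>i\<le>k. a i $ p $ r * b (k - i) $ r $ q)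
                 sums (\<Sum>r\<in>UNIV. suminf a $ p $ r * suminf b $ r $ q)"
      by (rule sums_sum)
    moreover have "(\<Sum>i\<le>k. a i ** b (k - i)) $ p $ q
                     = (\<Sum>r\<in>UNIV. \<Sum>i\<le>k. a i $ p $ r * b (k - i) $ r $ q)" for k
      unfolding matrix_matrix_mult_def by simp (rule sum.swap)
    ultimately show ?thesis
      by (simp add: matrix_matrix_mult_def)
  qed
  note entry = this
  show ?thesis
    unfolding sums_def
  proof (intro vec_tendstoI)
    fix p q
    show "((\<lambda>n. (\<Sum>k<n. \<Sum>i\<le>k. a i ** b (k - i)) $ p $ q) \<longlongrightarrow> (suminf a ** suminf b) $ p $ q) sequentially"
      using entry[of p q] by (simp add: sums_def)
  qed
qed

lemma mexp_uminus_mult: "mexp (- (A::real^'n^'n)) ** mexp A = mat 1"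
proof -
  let ?t = "\<lambda>A k. (1 / fact k) *\<^sub>R matpow A k"
  have "(\<lambda>k. \<Sum>i\<le>k. ?t (-A) i ** ?t A (k - i)) sums (mexp (-A) ** mexp A)"
    using Cauchy_product_sums_matrix[OF summable_norm_mexp_series summable_norm_mexp_series]
      sums_unique[OF mexp_sums[of A]] sums_unique[OF mexp_sums[of "-A"]] by simp
  moreover have "(\<Sum>i\<le>k. ?t (-A) i ** ?t A (k - i)) = (if k = 0 then mat 1 else 0)" for k
  proof -
    have "?t (-A) i ** ?t A (k - i) = ((-1) ^ i * of_nat (k choose i) / fact k) *\<^sub>R matpow A k"
      if "i \<le> k" for i
    proof -
      have "?t (-A) i ** ?t A (k - i)
              = ((-1) ^ i / (fact i * fact (k - i))) *\<^sub>R (matpow A i ** matpow A (k - i))"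
        by (simp add: matpow_uminus matrix_scalar_ac flip: scalar_matrix_assoc)
      also have "matpow A i ** matpow A (k - i) = matpow A k"
        using that by (simp flip: matpow_add)
      finally show ?thesis
        using that by (simp add: binomial_fact)
    qed
    then have "(\<Sum>i\<le>k. ?t (-A) i ** ?t A (k - i))
                 = ((\<Sum>i\<le>k. (-1) ^ i * of_nat (k choose i)) / fact k) *\<^sub>R matpow A k"
      by (simp add: scaleR_sum_left sum_divide_distrib)
    then show ?thesis
      by (simp add: choose_alternating_sum)
  qed
  ultimately have "(\<lambda>k. if k = 0 then mat 1 else 0) sums (mexp (-A) ** mexp A)"
    by simp
  moreover have "(\<lambda>k. if k = 0 then mat 1 else 0) sums (mat 1 :: real^'n^'n)"
    using sums_single[of 0 "\<lambda>_. mat 1 :: real^'n^'n"] by simp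
  ultimately show ?thesis
    by (rule sums_unique2)
qed

lemma transpose_mexp: "transpose (mexp (A::real^'n^'n)) = mexp (transpose A)"
  using bounded_linear.sums[OF bounded_linear_transpose mexp_sums[of A]] mexp_sums[of "transpose A"]
  by (simp add: transpose_scalar transpose_matpow sums_unique2)

lemma orthogonal_matrix_mexp:
  "transpose A = - (A::real^'n^'n) \<Longrightarrow> orthogonal_matrix (mexp A)"
  unfolding orthogonal_matrix by (simp add: transpose_mexp mexp_uminus_mult)

lemma norm_mexp_remainder_le:
  "norm (mexp (A::real^'n^'n) - mat 1 - A) \<le> sqrt CARD('n) * (norm A)\<^sup>2 * exp (norm A)"
proof -
  let ?c = "sqrt CARD('n)"
  let ?t = "\<lambda>k. (1 / fact k) *\<^sub>R matpow A k"
  have "(\<lambda>i. ?t (i + 2)) sums (mexp A - (\<Sum>i<2. ?t i))"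
    by (rule sums_split_initial_segment[OF mexp_sums])
  then have rem: "(\<lambda>i. ?t (i + 2)) sums (mexp A - mat 1 - A)"
    by (simp add: numeral_2_eq_2 diff_diff_eq)
  have bound: "norm (?t (i + 2)) \<le> ?c * (norm A)\<^sup>2 * (norm A ^ i / fact i)" for i
  proof -
    have "norm (?t (i + 2)) \<le> ?c * (norm A ^ (i + 2) / fact (i + 2))"
      by (rule norm_mexp_series_le)
    also have "\<dots> \<le> ?c * (norm A ^ (i + 2) / fact i)"
      by (intro mult_left_mono divide_left_mono fact_mono) simp_all
    finally show ?thesis
      by (simp add: power_add power2_eq_square mult_ac)
  qed
  have "(\<lambda>i. ?c * (norm A)\<^sup>2 * (norm A ^ i / fact i)) sums (?c * (norm A)\<^sup>2 * exp (norm A))"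
    by (rule sums_mult[OF exp_series_sums])
  from rem this bound show ?thesis
    by (rule norm_sums_le)
qed

section \<open>Second-order bounded retractions of O(n)\<close>

lemma subspace_tangent_orth: "subspace (tangent_orth (Q::real^'n^'n))"
proof -
  have "linear (\<lambda>V. transpose Q ** V + transpose V ** Q)"
    by (rule linearI)
      (simp_all add: matrix_matrix_mult_def transpose_def vec_eq_iff sum.distrib algebra_simps
        sum_distrib_left)
  then show ?thesis
    unfolding tangent_orth_def by (rule linear_subspace_kernel)
qed

lemma inner_proj_tangent:
  assumes "V \<in> tangent_orth Q"
  shows "proj_tangent Q G \<bullet> V = G \<bullet> V"
proof -
  let ?T = "tangent_orth Q"
  have span_T: "span ?T = ?T"
    by (simp add: span_eq_iff subspace_tangent_orth)
  obtain P N where P: "P \<in> ?T" and N: "\<And>W. W \<in> ?T \<Longrightarrow> N \<bullet> W = 0" and G: "G = P + N"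
    using orthogonal_subspace_decomp_exists[of ?T G] unfolding span_T orthogonal_def by metis
  have "proj_tangent Q G = P"
    unfolding proj_tangent_def
  proof (rule the_equality)
    fix P' assume P': "P' \<in> ?T \<and> (\<forall>V\<in>?T. (G - P') \<bullet> V = 0)"
    then have "P' - P \<in> ?T"
      using P subspace_tangent_orth by (blast intro: subspace_diff)
    then have "(G - P') \<bullet> (P' - P) = 0" and "(G - P) \<bullet> (P' - P) = 0"
      using P' N G by auto
    then have "(P' - P) \<bullet> (P' - P) = 0"
      by (simp add: inner_diff_left inner_diff_right inner_commute)
    then show "P' = P" by simp
  qed (use P N G in auto)
  then show ?thesis
    using N[OF assms] G by (simp add: inner_add_left)
qed

lemma inner_riem_grad:
  "V \<in> tangent_orth Q \<Longrightarrow> riem_grad g Q \<bullet> V = eucl_grad g Q \<bullet> V"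
  unfolding riem_grad_def by (rule inner_proj_tangent)

lemma tangent_orth_skew:
  "V \<in> tangent_orth Q \<Longrightarrow> transpose (transpose Q ** V) = - (transpose Q ** V)"
  by (simp add: tangent_orth_def matrix_transpose_mul eq_neg_iff_add_eq_0 add.commute)

lemma norm_orth_group: "Q \<in> orth_group \<Longrightarrow> norm (Q::real^'n^'n) = sqrt CARD('n)"
  by (simp add: orth_group_def norm_orthogonal_matrix)

definition retraction_second_order_bound ::
  "(('n::finite) mat \<Rightarrow> 'n mat \<Rightarrow> 'n mat) \<Rightarrow> real \<Rightarrow> bool" where
  "retraction_second_order_bound Rp \<alpha> \<longleftrightarrow>
     (\<forall>Q\<in>orth_group. \<forall>V\<in>tangent_orth Q.
        Rp Q V \<in> orth_group \<and> norm (Rp Q V - Q - V) \<le> \<alpha> * (norm V)\<^sup>2)"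

lemma retraction_second_order_boundI:
  fixes Rp :: "('n::finite) mat \<Rightarrow> 'n mat \<Rightarrow> 'n mat"
  assumes maps: "\<And>Q V. Q \<in> orth_group \<Longrightarrow> V \<in> tangent_orth Q \<Longrightarrow> Rp Q V \<in> orth_group"
    and near: "\<And>Q V. Q \<in> orth_group \<Longrightarrow> V \<in> tangent_orth Q \<Longrightarrow> norm V \<le> 1 \<Longrightarrow>
                 norm (Rp Q V - Q - V) \<le> \<alpha> * (norm V)\<^sup>2"
    and "0 \<le> \<alpha>"
  shows "retraction_second_order_bound Rp (\<alpha> + 2 * sqrt CARD('n) + 1)"
  unfolding retraction_second_order_bound_def
proof (intro ballI conjI)
  fix Q V :: "'n mat" assume Q: "Q \<in> orth_group" and V: "V \<in> tangent_orth Q"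
  let ?c = "sqrt CARD('n)"
  show "Rp Q V \<in> orth_group" using maps[OF Q V] .
  show "norm (Rp Q V - Q - V) \<le> (\<alpha> + 2 * ?c + 1) * (norm V)\<^sup>2"
  proof (cases "norm V \<le> 1")
    case True
    have "\<alpha> * (norm V)\<^sup>2 \<le> (\<alpha> + 2 * ?c + 1) * (norm V)\<^sup>2"
      by (intro mult_right_mono) simp_all
    with near[OF Q V True] show ?thesis by linarith
  next
    case False
    then have V_ge: "1 \<le> norm V" by simp
    then have V1: "1 \<le> (norm V)\<^sup>2" by (simp add: one_le_power)
    have V2: "norm V \<le> (norm V)\<^sup>2"
      using mult_left_mono[OF V_ge, of "norm V"] by (simp add: power2_eq_square)
    have "norm (Rp Q V - Q - V) \<le> norm (Rp Q V) + norm Q + norm V"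
      using norm_triangle_ineq4[of "Rp Q V - Q" V] norm_triangle_ineq4[of "Rp Q V" Q] by linarith
    also have "\<dots> = 2 * ?c * 1 + norm V"
      using norm_orth_group[OF Q] norm_orth_group[OF maps[OF Q V]] by simp
    also have "\<dots> \<le> 2 * ?c * (norm V)\<^sup>2 + (norm V)\<^sup>2"
      using V1 V2 by (intro add_mono mult_left_mono) simp_all
    also have "\<dots> \<le> (\<alpha> + 2 * ?c + 1) * (norm V)\<^sup>2"
      using \<open>0 \<le> \<alpha>\<close> by (simp add: algebra_simps)
    finally show ?thesis .
  qed
qed

lemma retraction_first_order_bound:
  fixes Rp :: "('n::finite) mat \<Rightarrow> 'n mat \<Rightarrow> 'n mat"
  assumes Rp: "retraction_second_order_bound Rp \<alpha>" and "0 \<le> \<alpha>"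
    and Q: "Q \<in> orth_group" and V: "V \<in> tangent_orth Q"
  shows "norm (Rp Q V - Q) \<le> (1 + \<alpha> + 2 * sqrt CARD('n)) * norm V"
proof (cases "norm V \<le> 1")
  case True
  have "norm (Rp Q V - Q) \<le> norm V + norm (Rp Q V - Q - V)"
    using norm_triangle_ineq[of V "Rp Q V - Q - V"] by simp
  also have "\<dots> \<le> norm V + \<alpha> * (norm V)\<^sup>2"
    using Rp Q V unfolding retraction_second_order_bound_def by auto
  also have "\<dots> \<le> (1 + \<alpha>) * norm V"
    using True \<open>0 \<le> \<alpha>\<close>
    by (simp add: power2_eq_square distrib_right mult_left_le_one_le mult_left_mono)
  also have "\<dots> \<le> (1 + \<alpha> + 2 * sqrt CARD('n)) * norm V"
    by (intro mult_right_mono) simp_all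
  finally show ?thesis .
next
  case False
  have Y: "Rp Q V \<in> orth_group"
    using Rp Q V unfolding retraction_second_order_bound_def by auto
  have "norm (Rp Q V - Q) \<le> 2 * sqrt CARD('n)"
    using norm_triangle_ineq4[of "Rp Q V" Q] norm_orth_group[OF Q] norm_orth_group[OF Y] by simp
  also have "\<dots> \<le> (1 + \<alpha> + 2 * sqrt CARD('n)) * 1"
    using \<open>0 \<le> \<alpha>\<close> by simp
  also have "\<dots> \<le> (1 + \<alpha> + 2 * sqrt CARD('n)) * norm V"
    using False \<open>0 \<le> \<alpha>\<close> by (intro mult_left_mono) simp_all
  finally show ?thesis .
qed

lemma exp_orth_in_orth_group:
  "Q \<in> orth_group \<Longrightarrow> V \<in> tangent_orth Q \<Longrightarrow> exp_orth Q V \<in> orth_group"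
  by (simp add: exp_orth_def orth_group_def orthogonal_matrix_mul orthogonal_matrix_mexp
      tangent_orth_skew)

lemma exp_orth_second_order_bound:
  "\<exists>\<alpha>\<ge>0. retraction_second_order_bound (exp_orth :: ('n::finite) mat \<Rightarrow> _) \<alpha>"
proof -
  let ?c = "sqrt CARD('n)"
  have near: "norm (exp_orth Q V - Q - V) \<le> ?c * exp 1 * (norm V)\<^sup>2"
    if Q: "Q \<in> orth_group" and "V \<in> tangent_orth Q" and V1: "norm V \<le> 1" for Q V :: "'n mat"
  proof -
    let ?A = "transpose Q ** V"
    have Q_orth: "orthogonal_matrix Q" "orthogonal_matrix (transpose Q)"
      using Q by (simp_all add: orth_group_def)
    have A: "norm ?A = norm V"
      using norm_orthogonal_matrix_mult[OF Q_orth(2)] .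
    have "exp_orth Q V - Q - V = Q ** (mexp ?A - mat 1 - ?A)"
      using Q_orth(1)
      by (simp add: exp_orth_def matrix_mult_diff_right matrix_mul_assoc orthogonal_matrix_def)
    then have "norm (exp_orth Q V - Q - V) = norm (mexp ?A - mat 1 - ?A)"
      by (simp add: norm_orthogonal_matrix_mult[OF Q_orth(1)])
    also have "\<dots> \<le> ?c * (norm V)\<^sup>2 * exp (norm V)"
      using norm_mexp_remainder_le[of ?A] by (simp add: A)
    also have "\<dots> \<le> ?c * (norm V)\<^sup>2 * exp 1"
      using V1 by (intro mult_left_mono) simp_all
    finally show ?thesis by (simp add: mult_ac)
  qed
  have "retraction_second_order_bound (exp_orth :: 'n mat \<Rightarrow> _) (?c * exp 1 + 2 * ?c + 1)"
    by (rule retraction_second_order_boundI[OF exp_orth_in_orth_group near]) simp_all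
  then show ?thesis
    by (intro exI[of _ "?c * exp 1 + 2 * ?c + 1"]) simp
qed

lemma compact_unit_tangent_bundle:
  "compact {p \<in> (tangent_bundle_orth :: (('n::finite) mat \<times> 'n mat) set). norm (snd p) \<le> 1}"
    (is "compact ?K")
proof (rule compact_eq_bounded_closed[THEN iffD2], rule conjI)
  have "?K \<subseteq> cball 0 (sqrt CARD('n) + 1)"
  proof (clarsimp simp: tangent_bundle_orth_def)
    fix Q V :: "'n mat" assume "Q \<in> orth_group" "norm V \<le> 1"
    then show "norm (Q, V) \<le> sqrt CARD('n) + 1"
      using norm_Pair_le[of Q V] norm_orth_group[of Q] by simp
  qed
  then show "bounded ?K"
    by (rule bounded_subset[OF bounded_cball])
  have "?K = {p. transpose (fst p) ** fst p = mat 1} \<inter>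
      {p. transpose (fst p) ** snd p + transpose (snd p) ** fst p = 0} \<inter> {p. norm (snd p) \<le> 1}"
    by (auto simp: tangent_bundle_orth_def orth_group_def orthogonal_matrix tangent_orth_def)
  also have "closed \<dots>"
    by (intro closed_Int closed_Collect_eq closed_Collect_le continuous_intros)
  finally show "closed ?K" .
qed

lemma tangent_bundle_orth_scaleR:
  "Q \<in> orth_group \<Longrightarrow> V \<in> tangent_orth Q \<Longrightarrow> (Q, s *\<^sub>R V) \<in> tangent_bundle_orth"
  using subspace_tangent_orth[of Q] by (simp add: tangent_bundle_orth_def subspace_scale)

lemma vertical_segment_in_unit_tangent_bundle:
  assumes "Q \<in> orth_group" "V \<in> tangent_orth Q" "norm V \<le> 1"
  shows "closed_segment (Q, 0) (Q, V) \<subseteq> {p \<in> tangent_bundle_orth. norm (snd p) \<le> 1}"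
proof
  fix p assume "p \<in> closed_segment (Q, 0) (Q, V)"
  then obtain u where "0 \<le> u" "u \<le> 1" and "p = (Q, u *\<^sub>R V)"
    by (auto simp: in_segment algebra_simps)
  then show "p \<in> {p \<in> tangent_bundle_orth. norm (snd p) \<le> 1}"
    using tangent_bundle_orth_scaleR[OF assms(1,2), of u] assms(3) by (simp add: mult_le_one)
qed

lemma retraction_extension_vertical_derivative:
  assumes R: "is_retraction R" and Q: "Q \<in> orth_group" and V: "V \<in> tangent_orth Q"
    and h_R: "\<And>p. p \<in> tangent_bundle_orth \<Longrightarrow> h p = R (fst p) (snd p)"
    and h': "(h has_derivative h') (at (Q, 0))"
  shows "h' (0, V) = V"
proof -
  have "((\<lambda>s. (Q, s *\<^sub>R V)) has_derivative (\<lambda>s. (0, s *\<^sub>R V))) (at 0)"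
    by (auto intro!: derivative_eq_intros)
  from has_derivative_compose[OF this] h'
  have h_line: "((\<lambda>s. h (Q, s *\<^sub>R V)) has_derivative (\<lambda>s. h' (0, s *\<^sub>R V))) (at 0)"
    by simp
  have scale: "((\<lambda>s::real. s *\<^sub>R V) has_derivative (\<lambda>s. s *\<^sub>R V)) (at 0)"
    by (auto intro!: derivative_eq_intros)
  have "range (\<lambda>s::real. s *\<^sub>R V) \<subseteq> tangent_orth Q"
    using V subspace_tangent_orth[of Q] by (auto intro: subspace_scale)
  moreover have "(R Q has_derivative id) (at 0 within tangent_orth Q)"
    using R Q unfolding is_retraction_def by simp
  ultimately have "(R Q has_derivative id) (at ((\<lambda>s::real. s *\<^sub>R V) 0) within range (\<lambda>s::real. s *\<^sub>R V))"
    by (simp add: has_derivative_subset)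
  from diff_chain_within[OF scale this]
  have R_line: "((\<lambda>s. R Q (s *\<^sub>R V)) has_derivative (\<lambda>s. s *\<^sub>R V)) (at 0)"
    by (simp add: o_def)
  have "(\<lambda>s. h (Q, s *\<^sub>R V)) = (\<lambda>s. R Q (s *\<^sub>R V))"
    using h_R tangent_bundle_orth_scaleR[OF Q V] by simp
  with h_line R_line have "(\<lambda>s. h' (0, s *\<^sub>R V)) = (\<lambda>s. s *\<^sub>R V)"
    by (simp add: has_derivative_unique)
  from fun_cong[OF this, of 1] show ?thesis
    by simp
qed

lemma is_retraction_second_order_bound:
  fixes R :: "('n::finite) mat \<Rightarrow> 'n mat \<Rightarrow> 'n mat"
  assumes R: "is_retraction R"
  shows "\<exists>\<alpha>\<ge>0. retraction_second_order_bound R \<alpha>"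
proof -
  let ?TB = "tangent_bundle_orth :: ('n mat \<times> 'n mat) set"
  let ?K = "{p \<in> ?TB. norm (snd p) \<le> 1}"
  obtain U h where "?TB \<subseteq> U" and h_R: "\<And>p. p \<in> ?TB \<Longrightarrow> h p = R (fst p) (snd p)"
    and C: "\<forall>k. Ck_on k h U"
    using R unfolding is_retraction_def smooth_on_set_def by blast
  obtain h' M where h': "\<And>x. x \<in> U \<Longrightarrow> (h has_derivative h' x) (at x)" and "0 \<le> M"
    and taylor: "\<And>x y. closed_segment x y \<subseteq> ?K \<Longrightarrow>
                   norm (h y - h x - h' x (y - x)) \<le> M * (norm (y - x))\<^sup>2"
    using \<open>?TB \<subseteq> U\<close>
    by (rule Ck_on_2_taylor_bound[OF spec[OF C, of 2] compact_unit_tangent_bundle order_trans, rotated])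
      auto
  have "norm (R Q V - Q - V) \<le> M * (norm V)\<^sup>2"
    if Q: "Q \<in> orth_group" and V: "V \<in> tangent_orth Q" and V1: "norm V \<le> 1" for Q V
  proof -
    have "(Q, 0) \<in> U"
      using tangent_bundle_orth_scaleR[OF Q V, of 0] \<open>?TB \<subseteq> U\<close> by auto
    then have h'_Q: "(h has_derivative h' (Q, 0)) (at (Q, 0))"
      by (rule h')
    have "h' (Q, 0) (0, V) = V"
      by (rule retraction_extension_vertical_derivative[OF R Q V _ h'_Q]) (rule h_R)
    moreover have "closed_segment (Q, 0) (Q, V) \<subseteq> ?K"
      using Q V V1 by (rule vertical_segment_in_unit_tangent_bundle)
    moreover have "h (Q, V) = R Q V" "h (Q, 0) = Q"
      using h_R tangent_bundle_orth_scaleR[OF Q V, of 1] tangent_bundle_orth_scaleR[OF Q V, of 0]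
        R Q unfolding is_retraction_def by auto
    ultimately show ?thesis
      using taylor[of "(Q, 0)" "(Q, V)"] by simp
  qed
  moreover have "R Q V \<in> orth_group" if "Q \<in> orth_group" "V \<in> tangent_orth Q" for Q V
    using R that unfolding is_retraction_def tangent_bundle_orth_def by fast
  ultimately have "retraction_second_order_bound R (M + 2 * sqrt CARD('n) + 1)"
    using retraction_second_order_boundI \<open>0 \<le> M\<close> by blast
  then show ?thesis
    using \<open>0 \<le> M\<close> by (intro exI[of _ "M + 2 * sqrt CARD('n) + 1"]) simp
qed

lemma grad_lipschitz_retraction_mono:
  fixes g :: "('n::finite) mat \<Rightarrow> real"
  assumes "grad_lipschitz_retraction g Rp L" "L \<le> L'"
  shows "grad_lipschitz_retraction g Rp L'"
  unfolding grad_lipschitz_retraction_def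
proof (intro ballI)
  fix Q V :: "'n mat" assume "Q \<in> orth_group" "V \<in> tangent_orth Q"
  moreover have "L / 2 * (norm V)\<^sup>2 \<le> L' / 2 * (norm V)\<^sup>2"
    using assms(2) by (intro mult_right_mono) simp_all
  ultimately show "g (Rp Q V) \<le> g Q + riem_grad g Q \<bullet> V + L' / 2 * (norm V)\<^sup>2"
    using assms(1) unfolding grad_lipschitz_retraction_def by fastforce
qed

lemma grad_lipschitz_retractionI:
  fixes g :: "('n::finite) mat \<Rightarrow> real"
  defines "c \<equiv> sqrt CARD('n)"
  assumes deriv: "\<And>Y. (g has_derivative (\<lambda>H. gr Y \<bullet> H)) (at Y)"
    and lip: "\<And>Y1 Y2. norm Y1 \<le> c \<Longrightarrow> norm Y2 \<le> c \<Longrightarrow> norm (gr Y1 - gr Y2) \<le> Lg * norm (Y1 - Y2)"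
    and bound: "\<And>Q. Q \<in> orth_group \<Longrightarrow> norm (gr Q) \<le> M"
    and Rp: "retraction_second_order_bound Rp \<alpha>" and "0 \<le> \<alpha>" "0 \<le> Lg"
  shows "grad_lipschitz_retraction g Rp (2 * (M * \<alpha> + Lg * (1 + \<alpha> + 2 * c)\<^sup>2))"
  unfolding grad_lipschitz_retraction_def
proof (intro ballI)
  fix Q V :: "'n mat" assume Q: "Q \<in> orth_group" and V: "V \<in> tangent_orth Q"
  let ?Y = "Rp Q V"
  have Y: "?Y \<in> orth_group" and rem: "norm (?Y - Q - V) \<le> \<alpha> * (norm V)\<^sup>2"
    using Rp Q V unfolding retraction_second_order_bound_def by auto
  have "\<bar>g ?Y - g Q - gr Q \<bullet> (?Y - Q)\<bar> \<le> Lg * (norm (?Y - Q))\<^sup>2"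
  proof (rule lipschitz_gradient_remainder_le[where S="cball 0 c"])
    show "Q \<in> cball 0 c" "?Y \<in> cball 0 c"
      using norm_orth_group[OF Q] norm_orth_group[OF Y] by (simp_all add: c_def)
    then show "norm (gr Z - gr Q) \<le> Lg * norm (Z - Q)" if "Z \<in> cball 0 c" for Z
      using lip that by simp
  qed (use deriv \<open>0 \<le> Lg\<close> in auto)
  moreover have "gr Q \<bullet> (?Y - Q) = gr Q \<bullet> V + gr Q \<bullet> (?Y - Q - V)"
    by (simp add: inner_diff_right)
  moreover have "gr Q \<bullet> (?Y - Q - V) \<le> M * (\<alpha> * (norm V)\<^sup>2)"
  proof -
    have "gr Q \<bullet> (?Y - Q - V) \<le> norm (gr Q) * norm (?Y - Q - V)"
      by (rule norm_cauchy_schwarz)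
    also have "\<dots> \<le> M * (\<alpha> * (norm V)\<^sup>2)"
      using bound[OF Q] rem by (intro mult_mono) (auto intro: order_trans[OF norm_ge_zero])
    finally show ?thesis .
  qed
  moreover have "Lg * (norm (?Y - Q))\<^sup>2 \<le> Lg * ((1 + \<alpha> + 2 * c)\<^sup>2 * (norm V)\<^sup>2)"
    using retraction_first_order_bound[OF Rp \<open>0 \<le> \<alpha>\<close> Q V] \<open>0 \<le> Lg\<close>
    by (intro mult_left_mono) (simp_all add: c_def power_mono flip: power_mult_distrib)
  moreover have "riem_grad g Q \<bullet> V = gr Q \<bullet> V"
    using inner_riem_grad[OF V] eucl_grad_eqI[OF deriv] by simp
  moreover have "2 * (M * \<alpha> + Lg * (1 + \<alpha> + 2 * c)\<^sup>2) / 2 * (norm V)\<^sup>2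
                   = M * (\<alpha> * (norm V)\<^sup>2) + Lg * ((1 + \<alpha> + 2 * c)\<^sup>2 * (norm V)\<^sup>2)"
    by (simp add: algebra_simps)
  ultimately show "g ?Y \<le> g Q + riem_grad g Q \<bullet> V
                     + 2 * (M * \<alpha> + Lg * (1 + \<alpha> + 2 * c)\<^sup>2) / 2 * (norm V)\<^sup>2"
    by linarith
qed

section \<open>The function F (Q Diag l Q^T)\<close>

locale sym_lipschitz_gradient =
  fixes F :: "('n::finite) mat \<Rightarrow> real" and gradF :: "'n mat \<Rightarrow> 'n mat" and L_F :: real
  assumes gradF_sym: "\<And>X. X \<in> sym_mats \<Longrightarrow> gradF X \<in> sym_mats"
    and F_deriv: "\<And>X. X \<in> sym_mats \<Longrightarrow> (F has_derivative (\<lambda>H. gradF X \<bullet> H)) (at X within sym_mats)"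
    and gradF_lipschitz: "\<And>X1 X2. X1 \<in> sym_mats \<Longrightarrow> X2 \<in> sym_mats \<Longrightarrow>
                            norm (gradF X1 - gradF X2) \<le> L_F * norm (X1 - X2)"
    and L_F_nonneg: "0 \<le> L_F"
begin

abbreviation F_Diag :: "'n mat \<Rightarrow> real^'n \<Rightarrow> real" where
  "F_Diag Q l \<equiv> F (Q ** Diag l ** transpose Q)"

abbreviation grad_Q :: "real^'n \<Rightarrow> 'n mat \<Rightarrow> 'n mat" where
  "grad_Q l Q \<equiv> 2 *\<^sub>R (gradF (Q ** Diag l ** transpose Q) ** Q ** Diag l)"

abbreviation grad_lambda :: "'n mat \<Rightarrow> real^'n \<Rightarrow> real^'n" where
  "grad_lambda Q l \<equiv> mat_diag (transpose Q ** gradF (Q ** Diag l ** transpose Q) ** Q)"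

lemma has_derivative_F_comp:
  assumes "(\<phi> has_derivative \<phi>') (at x)" and "\<And>x. \<phi> x \<in> sym_mats"
  shows "((\<lambda>x. F (\<phi> x)) has_derivative (\<lambda>h. gradF (\<phi> x) \<bullet> \<phi>' h)) (at x)"
  using has_derivative_in_compose2[OF F_deriv, of \<phi> UNIV x \<phi>'] assms by auto

lemma has_derivative_F_Diag_Q:
  "((\<lambda>Q. F_Diag Q l) has_derivative (\<lambda>H. grad_Q l Q \<bullet> H)) (at Q)"
proof -
  let ?G = "gradF (Q ** Diag l ** transpose Q)"
  have G_sym: "transpose ?G = ?G"
    using gradF_sym[OF conj_Diag_in_sym_mats] by (simp add: sym_mats_def)
  have "?G \<bullet> (Q ** Diag l ** transpose H) = (?G ** Q ** Diag l) \<bullet> H" for H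
  proof -
    have "?G \<bullet> (Q ** Diag l ** transpose H) = transpose (transpose (Q ** Diag l) ** ?G) \<bullet> H"
      by (simp only: inner_matrix_mult_left inner_transpose)
    also have "transpose (transpose (Q ** Diag l) ** ?G) = ?G ** Q ** Diag l"
      by (simp only: matrix_transpose_mul transpose_transpose G_sym matrix_mul_assoc)
    finally show ?thesis .
  qed
  moreover have "?G \<bullet> (H ** Diag l ** transpose Q) = (?G ** Q ** Diag l) \<bullet> H" for H
    by (simp add: inner_matrix_mult_right matrix_mul_assoc)
  moreover have "((\<lambda>Q. F_Diag Q l) has_derivative
      (\<lambda>H. ?G \<bullet> (Q ** Diag l ** transpose H + H ** Diag l ** transpose Q))) (at Q)"
    by (rule has_derivative_F_comp[OF has_derivative_conj conj_Diag_in_sym_mats])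
  ultimately show ?thesis
    by (simp add: inner_add_right)
qed

lemma has_derivative_F_Diag_lambda:
  "(F_Diag Q has_derivative (\<lambda>h. grad_lambda Q l \<bullet> h)) (at l)"
proof -
  let ?G = "gradF (Q ** Diag l ** transpose Q)"
  have "?G \<bullet> (Q ** Diag h ** transpose Q) = grad_lambda Q l \<bullet> h" for h
  proof -
    have "?G \<bullet> (Q ** Diag h ** transpose Q) = (?G ** Q) \<bullet> (Q ** Diag h)"
      by (simp only: inner_matrix_mult_right transpose_transpose)
    also have "\<dots> = (transpose Q ** ?G ** Q) \<bullet> Diag h"
      by (simp only: inner_matrix_mult_left matrix_mul_assoc)
    finally show ?thesis
      by (simp only: inner_Diag_right)
  qed
  moreover have "(F_Diag Q has_derivative (\<lambda>h. ?G \<bullet> (Q ** Diag h ** transpose Q))) (at l)"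
    by (rule has_derivative_F_comp[OF bounded_linear_imp_has_derivative[OF bounded_linear_conj_Diag]
          conj_Diag_in_sym_mats])
  ultimately show ?thesis
    by simp
qed

lemma eucl_grad_F_Diag_lambda: "eucl_grad (F_Diag Q) l = grad_lambda Q l"
  by (rule eucl_grad_eqI[OF has_derivative_F_Diag_lambda])

lemma norm_gradF_le: "X \<in> sym_mats \<Longrightarrow> norm (gradF X) \<le> norm (gradF 0) + L_F * norm X"
  using gradF_lipschitz[of X 0] norm_triangle_ineq2[of "gradF X" "gradF 0"]
  by (simp add: sym_mats_def)

lemma norm_gradF_conj_Diag_le:
  assumes "norm Y \<le> r" "norm l \<le> D"
  shows "norm (gradF (Y ** Diag l ** transpose Y)) \<le> norm (gradF 0) + L_F * (r\<^sup>2 * D)"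
proof -
  have "(norm Y)\<^sup>2 * norm l \<le> r\<^sup>2 * D"
    using assms by (intro mult_mono power_mono) (auto intro: order_trans[OF norm_ge_zero])
  then have "norm (Y ** Diag l ** transpose Y) \<le> r\<^sup>2 * D"
    using norm_conj_Diag_le[of Y l] by linarith
  then show ?thesis
    using norm_gradF_le[OF conj_Diag_in_sym_mats, of Y l] mult_left_mono[OF _ L_F_nonneg] by fastforce
qed

lemma norm_gradF_conj_Diag_diff_le:
  "norm (gradF (Y1 ** Diag l ** transpose Y1) - gradF (Y2 ** Diag l ** transpose Y2))
     \<le> L_F * ((norm Y1 + norm Y2) * norm l * norm (Y1 - Y2))"
  by (rule order_trans[OF gradF_lipschitz[OF conj_Diag_in_sym_mats conj_Diag_in_sym_mats]
        mult_left_mono[OF norm_conj_Diag_diff_le L_F_nonneg]])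

lemma norm_grad_Q_le:
  assumes "norm Y \<le> r" "norm l \<le> D"
  shows "norm (grad_Q l Y) \<le> 2 * ((norm (gradF 0) + L_F * (r\<^sup>2 * D)) * r * D)"
proof -
  have "norm (gradF (Y ** Diag l ** transpose Y) ** Y ** Diag l)
          \<le> norm (gradF (Y ** Diag l ** transpose Y)) * norm Y * norm l"
    using norm_matrix_mult3_le by (metis norm_Diag)
  also have "\<dots> \<le> (norm (gradF 0) + L_F * (r\<^sup>2 * D)) * r * D"
  proof -
    have "0 \<le> r" "0 \<le> D"
      using assms by (auto intro: order_trans[OF norm_ge_zero])
    then show ?thesis
      using norm_gradF_conj_Diag_le[OF assms] assms L_F_nonneg by (intro mult_mono) auto
  qed
  finally show ?thesis by simp
qed

lemma grad_Q_lipschitz: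
  assumes Y1: "norm Y1 \<le> r" and Y2: "norm Y2 \<le> r" and l: "norm l \<le> D"
  shows "norm (grad_Q l Y1 - grad_Q l Y2)
           \<le> 2 * (2 * L_F * r\<^sup>2 * D\<^sup>2 + (norm (gradF 0) + L_F * (r\<^sup>2 * D)) * D) * norm (Y1 - Y2)"
proof -
  let ?G = "\<lambda>Y. gradF (Y ** Diag l ** transpose Y)"
  have r: "0 \<le> r" and D: "0 \<le> D"
    using Y1 l by (auto intro: order_trans[OF norm_ge_zero])
  have "L_F * ((norm Y1 + norm Y2) * norm l * norm (Y1 - Y2)) \<le> L_F * (2 * r * D * norm (Y1 - Y2))"
    using Y1 Y2 l r D L_F_nonneg by (intro mult_left_mono mult_right_mono mult_mono) auto
  with norm_gradF_conj_Diag_diff_le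
  have dG: "norm (?G Y1 - ?G Y2) \<le> L_F * (2 * r * D * norm (Y1 - Y2))"
    by (rule order_trans)
  have "grad_Q l Y1 - grad_Q l Y2 = 2 *\<^sub>R ((?G Y1 - ?G Y2) ** Y1 ** Diag l + ?G Y2 ** (Y1 - Y2) ** Diag l)"
    by (simp add: matrix_mult_diff_left matrix_mult_diff_right scaleR_diff_right)
  then have "norm (grad_Q l Y1 - grad_Q l Y2)
      \<le> 2 * (norm (?G Y1 - ?G Y2) * norm Y1 * norm l + norm (?G Y2) * norm (Y1 - Y2) * norm l)"
    using norm_triangle_ineq[of "(?G Y1 - ?G Y2) ** Y1 ** Diag l" "?G Y2 ** (Y1 - Y2) ** Diag l"]
      norm_matrix_mult3_le[of "?G Y1 - ?G Y2" Y1 "Diag l"] norm_matrix_mult3_le[of "?G Y2" "Y1 - Y2" "Diag l"]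
    by simp
  also have "\<dots> \<le> 2 * (L_F * (2 * r * D * norm (Y1 - Y2)) * r * D
                       + (norm (gradF 0) + L_F * (r\<^sup>2 * D)) * norm (Y1 - Y2) * D)"
    using dG norm_gradF_conj_Diag_le[OF Y2 l] Y1 l r D L_F_nonneg
    by (intro mult_left_mono add_mono mult_mono) auto
  finally show ?thesis
    by (simp add: power2_eq_square algebra_simps)
qed

lemma grad_lipschitz_retraction_F_Diag:
  assumes "retraction_second_order_bound Rp \<alpha>" "0 \<le> \<alpha>" "0 \<le> D"
  obtains L where "\<And>l. norm l \<le> D \<Longrightarrow> grad_lipschitz_retraction (\<lambda>Q. F_Diag Q l) Rp L"
proof -
  let ?c = "sqrt CARD('n)"
  let ?M = "2 * ((norm (gradF 0) + L_F * (?c\<^sup>2 * D)) * ?c * D)"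
  let ?Lg = "2 * (2 * L_F * ?c\<^sup>2 * D\<^sup>2 + (norm (gradF 0) + L_F * (?c\<^sup>2 * D)) * D)"
  have "grad_lipschitz_retraction (\<lambda>Q. F_Diag Q l) Rp (2 * (?M * \<alpha> + ?Lg * (1 + \<alpha> + 2 * ?c)\<^sup>2))"
    if l: "norm l \<le> D" for l
  proof (rule grad_lipschitz_retractionI[OF has_derivative_F_Diag_Q _ _ assms(1,2)])
    show "norm (grad_Q l Y1 - grad_Q l Y2) \<le> ?Lg * norm (Y1 - Y2)"
      if "norm Y1 \<le> ?c" "norm Y2 \<le> ?c" for Y1 Y2
      using grad_Q_lipschitz[OF that l] .
    show "norm (grad_Q l Q) \<le> ?M" if "Q \<in> orth_group" for Q
      using norm_grad_Q_le[OF _ l, of Q ?c] norm_orth_group[OF that] by simp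
    show "0 \<le> ?Lg"
      using L_F_nonneg \<open>0 \<le> D\<close> by simp
  qed
  then show ?thesis using that by blast
qed

lemma grad_lipschitz_retraction_F_Diag_exp_orth_and_retraction:
  assumes "is_retraction R" "0 \<le> D"
  obtains L where "1 \<le> L" and "\<And>l. norm l \<le> D \<Longrightarrow>
    grad_lipschitz_retraction (\<lambda>Q. F_Diag Q l) exp_orth L \<and> grad_lipschitz_retraction (\<lambda>Q. F_Diag Q l) R L"
proof -
  obtain \<alpha>\<^sub>1 where \<alpha>\<^sub>1: "retraction_second_order_bound (exp_orth :: 'n mat \<Rightarrow> _) \<alpha>\<^sub>1" "0 \<le> \<alpha>\<^sub>1"
    using exp_orth_second_order_bound by blast
  obtain L\<^sub>1 where L\<^sub>1: "\<And>l. norm l \<le> D \<Longrightarrow> grad_lipschitz_retraction (\<lambda>Q. F_Diag Q l) exp_orth L\<^sub>1"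
    using grad_lipschitz_retraction_F_Diag[OF \<alpha>\<^sub>1 assms(2)] by blast
  obtain \<alpha>\<^sub>2 where \<alpha>\<^sub>2: "retraction_second_order_bound R \<alpha>\<^sub>2" "0 \<le> \<alpha>\<^sub>2"
    using is_retraction_second_order_bound[OF assms(1)] by blast
  obtain L\<^sub>2 where L\<^sub>2: "\<And>l. norm l \<le> D \<Longrightarrow> grad_lipschitz_retraction (\<lambda>Q. F_Diag Q l) R L\<^sub>2"
    using grad_lipschitz_retraction_F_Diag[OF \<alpha>\<^sub>2 assms(2)] by blast
  show ?thesis
    by (rule that[of "max 1 (max L\<^sub>1 L\<^sub>2)"])
      (auto intro!: grad_lipschitz_retraction_mono[OF L\<^sub>1] grad_lipschitz_retraction_mono[OF L\<^sub>2])
qed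

lemma grad_lambda_lipschitz:
  assumes "Q \<in> orth_group"
  shows "norm (grad_lambda Q l1 - grad_lambda Q l2) \<le> L_F * norm (l1 - l2)"
proof -
  have Q: "orthogonal_matrix Q" "orthogonal_matrix (transpose Q)"
    using assms by (simp_all add: orth_group_def)
  let ?G = "\<lambda>l. gradF (Q ** Diag l ** transpose Q)"
  have "grad_lambda Q l1 - grad_lambda Q l2 = mat_diag (transpose Q ** (?G l1 - ?G l2) ** Q)"
    by (simp add: mat_diag_diff matrix_mult_diff_left matrix_mult_diff_right)
  moreover have "norm (transpose Q ** (?G l1 - ?G l2) ** Q) = norm (?G l1 - ?G l2)"
    by (simp add: norm_matrix_mult_orthogonal[OF Q(1)] norm_orthogonal_matrix_mult[OF Q(2)])
  ultimately have "norm (grad_lambda Q l1 - grad_lambda Q l2) \<le> norm (?G l1 - ?G l2)"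
    using norm_mat_diag_le by metis
  also have "\<dots> \<le> L_F * norm (Q ** Diag l1 ** transpose Q - Q ** Diag l2 ** transpose Q)"
    by (rule gradF_lipschitz[OF conj_Diag_in_sym_mats conj_Diag_in_sym_mats])
  also have "Q ** Diag l1 ** transpose Q - Q ** Diag l2 ** transpose Q = Q ** Diag (l1 - l2) ** transpose Q"
    using linear_diff[OF bounded_linear.linear[OF bounded_linear_conj_Diag], of Q l1 l2] by simp
  finally show ?thesis
    by (simp add: norm_conj_Diag_orthogonal[OF Q(1)])
qed

lemma grad_lambda_lipschitz_orth:
  assumes U: "U \<in> orth_group" and V: "V \<in> orth_group" and l: "norm l \<le> D"
  shows "norm (grad_lambda U l - grad_lambda V l)
           \<le> 2 * (norm (gradF 0) + L_F * D + sqrt CARD('n) * L_F * D) * norm (U - V)"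
proof -
  have U': "orthogonal_matrix U" "orthogonal_matrix (transpose U)"
    and V': "orthogonal_matrix V" "orthogonal_matrix (transpose V)"
    using U V by (simp_all add: orth_group_def)
  let ?G = "\<lambda>Y. gradF (Y ** Diag l ** transpose Y)"
  let ?B = "norm (gradF 0) + L_F * D"
  have D: "0 \<le> D" using l by (auto intro: order_trans[OF norm_ge_zero])
  have G: "norm (?G Y) \<le> ?B" if "orthogonal_matrix Y" for Y
    using norm_gradF_le[OF conj_Diag_in_sym_mats, of Y l, unfolded norm_conj_Diag_orthogonal[OF that]]
      mult_left_mono[OF l L_F_nonneg] by linarith
  have "(norm U + norm V) * norm l * norm (U - V) \<le> 2 * sqrt CARD('n) * D * norm (U - V)"
    using norm_orth_group[OF U] norm_orth_group[OF V] l by (simp add: mult_right_mono)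
  with norm_gradF_conj_Diag_diff_le
  have dG: "norm (?G U - ?G V) \<le> L_F * (2 * sqrt CARD('n) * D * norm (U - V))"
    by (rule order_trans[OF _ mult_left_mono[OF _ L_F_nonneg]])
  have "transpose U ** ?G U ** U - transpose V ** ?G V ** V
      = transpose (U - V) ** ?G U ** U + transpose V ** (?G U - ?G V) ** U + transpose V ** ?G V ** (U - V)"
    (is "?X = ?T1 + ?T2 + ?T3")
    by (simp add: matrix_mult_diff_left matrix_mult_diff_right transpose_diff)
  then have "norm ?X \<le> norm ?T1 + norm ?T2 + norm ?T3"
    using norm_triangle_ineq[of "?T1 + ?T2" ?T3] norm_triangle_ineq[of ?T1 ?T2] by simp
  moreover have "norm ?T1 \<le> norm (U - V) * ?B"
    using norm_matrix_mult_le[of "transpose (U - V)" "?G U"] G[OF U'(1)]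
    by (simp add: norm_matrix_mult_orthogonal[OF U'(1)] norm_transpose)
      (meson mult_left_mono norm_ge_zero order_trans)
  moreover have "norm ?T2 = norm (?G U - ?G V)"
    by (simp add: norm_matrix_mult_orthogonal[OF U'(1)] norm_orthogonal_matrix_mult[OF V'(2)])
  moreover have "norm ?T3 \<le> ?B * norm (U - V)"
    using norm_matrix_mult_le[of "?G V" "U - V"] G[OF V'(1)]
    by (simp add: norm_orthogonal_matrix_mult[OF V'(2)] flip: matrix_mul_assoc)
      (meson mult_right_mono norm_ge_zero order_trans)
  ultimately have "norm ?X \<le> norm (U - V) * ?B + L_F * (2 * sqrt CARD('n) * D * norm (U - V)) + ?B * norm (U - V)"
    using dG by linarith
  then show ?thesis
    using norm_mat_diag_le[of "transpose U ** ?G U ** U - transpose V ** ?G V ** V"]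
    by (simp add: mat_diag_diff algebra_simps)
qed

end

theorem theorem5:
  fixes F :: "real^'n^'n \<Rightarrow> real"
    and gradF :: "real^'n^'n \<Rightarrow> real^'n^'n"
    and L_F D :: real
    and C :: "(real^'n) set"
    and R :: "real^'n^'n \<Rightarrow> real^'n^'n \<Rightarrow> real^'n^'n"
  assumes F_grad: "\<And>X. X \<in> sym_mats \<Longrightarrow> gradF X \<in> sym_mats \<and>
                     (F has_derivative (\<lambda>H. gradF X \<bullet> H)) (at X within sym_mats)"
    and F_lip: "\<And>X1 X2. X1 \<in> sym_mats \<Longrightarrow> X2 \<in> sym_mats \<Longrightarrow>
                  norm (gradF X1 - gradF X2) \<le> L_F * norm (X1 - X2)"
    and L_F_pos: "L_F > 0"
    and C_bdd: "\<And>l. l \<in> C \<Longrightarrow> norm l \<le> D"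
    and R_retr: "is_retraction R"
  defines "f \<equiv> (\<lambda>Q l. F (Q ** Diag l ** transpose Q))"
  shows "(\<exists>L_y\<ge>0. \<forall>Q\<in>orth_group. \<forall>l1\<in>C. \<forall>l2\<in>C.
            norm (eucl_grad (f Q) l1 - eucl_grad (f Q) l2) \<le> L_y * norm (l1 - l2))
       \<and> (\<exists>L_x\<ge>1. \<forall>l\<in>C.
            grad_lipschitz_retraction (\<lambda>Q. f Q l) exp_orth L_x \<and>
            grad_lipschitz_retraction (\<lambda>Q. f Q l) R L_x)
       \<and> (\<exists>L_xy\<ge>0. \<forall>U\<in>orth_group. \<forall>V\<in>orth_group. \<forall>l\<in>C.
            norm (eucl_grad (f U) l - eucl_grad (f V) l) \<le> L_xy * norm (U - V))"
proof -
  interpret sym_lipschitz_gradient F gradF L_F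
    using F_grad F_lip L_F_pos by unfold_locales auto
  \<comment> \<open>\<open>C\<close> may be empty, in which case \<open>D\<close> can be negative.\<close>
  define D' where "D' = max D 0"
  have "0 \<le> D'" and C_D': "\<And>l. l \<in> C \<Longrightarrow> norm l \<le> D'"
    using C_bdd by (auto simp: D'_def le_max_iff_disj)
  obtain L_x where "1 \<le> L_x" and L_x: "\<And>l. norm l \<le> D' \<Longrightarrow>
      grad_lipschitz_retraction (\<lambda>Q. F_Diag Q l) exp_orth L_x \<and> grad_lipschitz_retraction (\<lambda>Q. F_Diag Q l) R L_x"
    using grad_lipschitz_retraction_F_Diag_exp_orth_and_retraction[OF R_retr \<open>0 \<le> D'\<close>] by blast
  show ?thesis
    unfolding f_def eucl_grad_F_Diag_lambda
  proof (intro conjI)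
    show "\<exists>L_y\<ge>0. \<forall>Q\<in>orth_group. \<forall>l1\<in>C. \<forall>l2\<in>C.
            norm (grad_lambda Q l1 - grad_lambda Q l2) \<le> L_y * norm (l1 - l2)"
      using grad_lambda_lipschitz L_F_nonneg by blast
    show "\<exists>L_x\<ge>1. \<forall>l\<in>C. grad_lipschitz_retraction (\<lambda>Q. F_Diag Q l) exp_orth L_x \<and>
                             grad_lipschitz_retraction (\<lambda>Q. F_Diag Q l) R L_x"
      using \<open>1 \<le> L_x\<close> L_x C_D' by blast
    show "\<exists>L_xy\<ge>0. \<forall>U\<in>orth_group. \<forall>V\<in>orth_group. \<forall>l\<in>C.
            norm (grad_lambda U l - grad_lambda V l) \<le> L_xy * norm (U - V)"
      using grad_lambda_lipschitz_orth C_D' L_F_nonneg \<open>0 \<le> D'\<close>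
      by (intro exI[of _ "2 * (norm (gradF 0) + L_F * D' + sqrt CARD('n) * L_F * D')"]) auto
  qed
qed

end
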